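(* (1) If $U[-1]\to A\overset{f}{\to}B\to U$ is a distinguished triangle in $\mathscr{C}$ with $U\in\mathcal{U}$, then $A\in\mathscr{C}^-$ implies $B\in\mathscr{C}^-$. (2) If $S[-1]\to A\overset{f}{\to}B\to S$ is a distinguished triangle in $\mathscr{C}$ with $S\in\mathcal{S}$, then $B\in\mathscr{C}^-$ implies $A\in\mathscr{C}^-$.
   Context: $\mathscr{C}$ is a triangulated category with shift $[1]$; subcategories are full, additive, closed under isomorphisms and direct summands. $\mathrm{Ext}^1(X,Y)=\mathscr{C}(X,Y[1])$. $\mathcal{M}\ast\mathcal{N}$ is the full subcategory of objects $C$ admitting a distinguished triangle $M\to C\to N\to M[1]$ with $M\in\mathcal{M}$, $N\in\mathcal{N}$. A cotorsion pair $(\mathcal{U},\mathcal{V})$: $\mathrm{Ext}^1(\mathcal{U},\mathcal{V})=0$ and $\mathscr{C}=\mathcal{U}\ast\mathcal{V}[1]$. Fix a twin cotorsion pair, i.e. cotorsion pairs $(\mathcal{S},\mathcal{T}),(\mathcal{U},\mathcal{V})$ with $\mathrm{Ext}^1(\mathcal{S},\mathcal{V})=0$. Put $\mathcal{W}=\mathcal{T}\cap\mathcal{U}$ and $\mathscr{C}^-=\mathcal{S}[-1]\ast\mathcal{W}$. *)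

theory Defs
  imports Main
begin

text \<open>A triangulated category, encoded by its objects (type 'o), morphisms (type 'm),
  hom-sets, composition (Comp g f = g after f), identities, abelian-group structure on
  hom-sets, the shift functor [1] on objects and morphisms, and the class of
  distinguished triangles  X -f-> Y -g-> Z -h-> X[1].\<close>

record ('o, 'm) tricat =
  Hom  :: "'o \<Rightarrow> 'o \<Rightarrow> 'm set"
  Comp :: "'m \<Rightarrow> 'm \<Rightarrow> 'm"
  Idm  :: "'o \<Rightarrow> 'm"
  Zer  :: "'o \<Rightarrow> 'o \<Rightarrow> 'm"
  Add  :: "'m \<Rightarrow> 'm \<Rightarrow> 'm"
  Neg  :: "'m \<Rightarrow> 'm"
  Sh   :: "'o \<Rightarrow> 'o"
  ShM  :: "'m \<Rightarrow> 'm"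
  Dist :: "'o \<Rightarrow> 'o \<Rightarrow> 'o \<Rightarrow> 'm \<Rightarrow> 'm \<Rightarrow> 'm \<Rightarrow> bool"

definition is_iso :: "('o,'m) tricat \<Rightarrow> 'o \<Rightarrow> 'o \<Rightarrow> 'm \<Rightarrow> bool" where
  "is_iso C X Y f \<longleftrightarrow> f \<in> Hom C X Y \<and>
     (\<exists>g \<in> Hom C Y X. Comp C g f = Idm C X \<and> Comp C f g = Idm C Y)"

definition iso_obj :: "('o,'m) tricat \<Rightarrow> 'o \<Rightarrow> 'o \<Rightarrow> bool" where
  "iso_obj C X Y \<longleftrightarrow> (\<exists>f. is_iso C X Y f)"

definition is_zero_obj :: "('o,'m) tricat \<Rightarrow> 'o \<Rightarrow> bool" where
  "is_zero_obj C Z \<longleftrightarrow> (\<forall>X. (\<exists>!f. f \<in> Hom C Z X) \<and> (\<exists>!f. f \<in> Hom C X Z))"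

definition is_biprod :: "('o,'m) tricat \<Rightarrow> 'o \<Rightarrow> 'o \<Rightarrow> 'o \<Rightarrow> bool" where
  "is_biprod C X Y P \<longleftrightarrow> (\<exists>i1 \<in> Hom C X P. \<exists>i2 \<in> Hom C Y P. \<exists>p1 \<in> Hom C P X. \<exists>p2 \<in> Hom C P Y.
     Comp C p1 i1 = Idm C X \<and> Comp C p2 i2 = Idm C Y \<and>
     Comp C p1 i2 = Zer C Y X \<and> Comp C p2 i1 = Zer C X Y \<and>
     Add C (Comp C i1 p1) (Comp C i2 p2) = Idm C P)"

definition additive_cat :: "('o,'m) tricat \<Rightarrow> bool" where
  "additive_cat C \<longleftrightarrow>
    (\<forall>X Y X' Y'. \<forall>f. f \<in> Hom C X Y \<longrightarrow> f \<in> Hom C X' Y' \<longrightarrow> X = X' \<and> Y = Y') \<and>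
    (\<forall>X Y Z f g. f \<in> Hom C X Y \<longrightarrow> g \<in> Hom C Y Z \<longrightarrow> Comp C g f \<in> Hom C X Z) \<and>
    (\<forall>W X Y Z f g h. f \<in> Hom C W X \<longrightarrow> g \<in> Hom C X Y \<longrightarrow> h \<in> Hom C Y Z \<longrightarrow>
        Comp C h (Comp C g f) = Comp C (Comp C h g) f) \<and>
    (\<forall>X. Idm C X \<in> Hom C X X) \<and>
    (\<forall>X Y f. f \<in> Hom C X Y \<longrightarrow> Comp C (Idm C Y) f = f \<and> Comp C f (Idm C X) = f) \<and>
    (\<forall>X Y. Zer C X Y \<in> Hom C X Y) \<and>
    (\<forall>X Y f g. f \<in> Hom C X Y \<longrightarrow> g \<in> Hom C X Y \<longrightarrow> Add C f g \<in> Hom C X Y) \<and>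
    (\<forall>X Y f. f \<in> Hom C X Y \<longrightarrow> Neg C f \<in> Hom C X Y) \<and>
    (\<forall>X Y f g h. f \<in> Hom C X Y \<longrightarrow> g \<in> Hom C X Y \<longrightarrow> h \<in> Hom C X Y \<longrightarrow>
        Add C (Add C f g) h = Add C f (Add C g h)) \<and>
    (\<forall>X Y f g. f \<in> Hom C X Y \<longrightarrow> g \<in> Hom C X Y \<longrightarrow> Add C f g = Add C g f) \<and>
    (\<forall>X Y f. f \<in> Hom C X Y \<longrightarrow> Add C f (Zer C X Y) = f) \<and>
    (\<forall>X Y f. f \<in> Hom C X Y \<longrightarrow> Add C f (Neg C f) = Zer C X Y) \<and>
    (\<forall>X Y Z f f' g. f \<in> Hom C X Y \<longrightarrow> f' \<in> Hom C X Y \<longrightarrow> g \<in> Hom C Y Z \<longrightarrow>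
        Comp C g (Add C f f') = Add C (Comp C g f) (Comp C g f')) \<and>
    (\<forall>X Y Z f g g'. f \<in> Hom C X Y \<longrightarrow> g \<in> Hom C Y Z \<longrightarrow> g' \<in> Hom C Y Z \<longrightarrow>
        Comp C (Add C g g') f = Add C (Comp C g f) (Comp C g' f)) \<and>
    (\<exists>Z. is_zero_obj C Z) \<and>
    (\<forall>X Y. \<exists>P. is_biprod C X Y P)"

definition shift_autoequiv :: "('o,'m) tricat \<Rightarrow> bool" where
  "shift_autoequiv C \<longleftrightarrow>
    (\<forall>X Y f. f \<in> Hom C X Y \<longrightarrow> ShM C f \<in> Hom C (Sh C X) (Sh C Y)) \<and>
    (\<forall>X. ShM C (Idm C X) = Idm C (Sh C X)) \<and>
    (\<forall>X Y Z f g. f \<in> Hom C X Y \<longrightarrow> g \<in> Hom C Y Z \<longrightarrow> ShM C (Comp C g f) = Comp C (ShM C g) (ShM C f)) \<and>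
    (\<forall>X Y f g. f \<in> Hom C X Y \<longrightarrow> g \<in> Hom C X Y \<longrightarrow> ShM C (Add C f g) = Add C (ShM C f) (ShM C g)) \<and>
    (\<forall>X Y. bij_betw (ShM C) (Hom C X Y) (Hom C (Sh C X) (Sh C Y))) \<and>
    (\<forall>Y. \<exists>X. iso_obj C (Sh C X) Y)"

definition is_triangle :: "('o,'m) tricat \<Rightarrow> 'o \<Rightarrow> 'o \<Rightarrow> 'o \<Rightarrow> 'm \<Rightarrow> 'm \<Rightarrow> 'm \<Rightarrow> bool" where
  "is_triangle C X Y Z f g h \<longleftrightarrow> f \<in> Hom C X Y \<and> g \<in> Hom C Y Z \<and> h \<in> Hom C Z (Sh C X)"

definition triangulated :: "('o,'m) tricat \<Rightarrow> bool" where
  "triangulated C \<longleftrightarrow> additive_cat C \<and> shift_autoequiv C \<and>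
    (\<forall>X Y Z f g h. Dist C X Y Z f g h \<longrightarrow> is_triangle C X Y Z f g h) \<and>
    \<comment> \<open>TR1: closure under isomorphisms of triangles\<close>
    (\<forall>X Y Z f g h X' Y' Z' f' g' h' a b c.
        Dist C X Y Z f g h \<longrightarrow> is_triangle C X' Y' Z' f' g' h' \<longrightarrow>
        is_iso C X X' a \<longrightarrow> is_iso C Y Y' b \<longrightarrow> is_iso C Z Z' c \<longrightarrow>
        Comp C b f = Comp C f' a \<longrightarrow> Comp C c g = Comp C g' b \<longrightarrow>
        Comp C (ShM C a) h = Comp C h' c \<longrightarrow> Dist C X' Y' Z' f' g' h') \<and>
    \<comment> \<open>TR1: X -id-> X -> 0 -> X[1] is distinguished\<close>
    (\<forall>X Z. is_zero_obj C Z \<longrightarrow> Dist C X X Z (Idm C X) (Zer C X Z) (Zer C Z (Sh C X))) \<and>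
    \<comment> \<open>TR1: every morphism extends to a distinguished triangle\<close>
    (\<forall>X Y f. f \<in> Hom C X Y \<longrightarrow> (\<exists>Z g h. Dist C X Y Z f g h)) \<and>
    \<comment> \<open>TR2: rotation\<close>
    (\<forall>X Y Z f g h. is_triangle C X Y Z f g h \<longrightarrow>
        (Dist C X Y Z f g h \<longleftrightarrow> Dist C Y Z (Sh C X) g h (Neg C (ShM C f)))) \<and>
    \<comment> \<open>TR3: morphism completion\<close>
    (\<forall>X Y Z f g h X' Y' Z' f' g' h' a b.
        Dist C X Y Z f g h \<longrightarrow> Dist C X' Y' Z' f' g' h' \<longrightarrow>
        a \<in> Hom C X X' \<longrightarrow> b \<in> Hom C Y Y' \<longrightarrow> Comp C b f = Comp C f' a \<longrightarrow>
        (\<exists>c \<in> Hom C Z Z'. Comp C c g = Comp C g' b \<and> Comp C (ShM C a) h = Comp C h' c)) \<and>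
    \<comment> \<open>TR4: octahedral axiom\<close>
    (\<forall>X Y Z Z' X' Y' f g p q r s t w.
        Dist C X Y Z' f p q \<longrightarrow> Dist C Y Z X' g r s \<longrightarrow> Dist C X Z Y' (Comp C g f) t w \<longrightarrow>
        (\<exists>u \<in> Hom C Z' Y'. \<exists>v \<in> Hom C Y' X'.
            Dist C Z' Y' X' u v (Comp C (ShM C p) s) \<and>
            Comp C u p = Comp C t g \<and> Comp C w u = q \<and>
            Comp C v t = r \<and> Comp C s v = Comp C (ShM C f) w))"

text \<open>Subcategories: full, additive, closed under isomorphisms and direct summands;
  identified with predicates on objects.\<close>
definition subcat :: "('o,'m) tricat \<Rightarrow> ('o \<Rightarrow> bool) \<Rightarrow> bool" where
  "subcat C P \<longleftrightarrow>
    (\<forall>X Y. P X \<longrightarrow> iso_obj C X Y \<longrightarrow> P Y) \<and>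
    (\<forall>Z. is_zero_obj C Z \<longrightarrow> P Z) \<and>
    (\<forall>X Y S. is_biprod C X Y S \<longrightarrow> P X \<longrightarrow> P Y \<longrightarrow> P S) \<and>
    (\<forall>X Y S. is_biprod C X Y S \<longrightarrow> P S \<longrightarrow> P X \<and> P Y)"

text \<open>Ext^1(M,N) = 0, where Ext^1(X,Y) = C(X, Y[1]).\<close>
definition ext1_zero :: "('o,'m) tricat \<Rightarrow> ('o \<Rightarrow> bool) \<Rightarrow> ('o \<Rightarrow> bool) \<Rightarrow> bool" where
  "ext1_zero C M N \<longleftrightarrow> (\<forall>X Y. M X \<longrightarrow> N Y \<longrightarrow> Hom C X (Sh C Y) = {Zer C X (Sh C Y)})"

definition ostar :: "('o,'m) tricat \<Rightarrow> ('o \<Rightarrow> bool) \<Rightarrow> ('o \<Rightarrow> bool) \<Rightarrow> 'o \<Rightarrow> bool" where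
  "ostar C M N A \<longleftrightarrow> (\<exists>X Y f g h. M X \<and> N Y \<and> Dist C X A Y f g h)"

definition shift_up :: "('o,'m) tricat \<Rightarrow> ('o \<Rightarrow> bool) \<Rightarrow> 'o \<Rightarrow> bool" where
  "shift_up C N Y \<longleftrightarrow> (\<exists>X. N X \<and> iso_obj C (Sh C X) Y)"

definition shift_down :: "('o,'m) tricat \<Rightarrow> ('o \<Rightarrow> bool) \<Rightarrow> 'o \<Rightarrow> bool" where
  "shift_down C N X \<longleftrightarrow> N (Sh C X)"

definition cotorsion_pair :: "('o,'m) tricat \<Rightarrow> ('o \<Rightarrow> bool) \<Rightarrow> ('o \<Rightarrow> bool) \<Rightarrow> bool" where
  "cotorsion_pair C U V \<longleftrightarrow> subcat C U \<and> subcat C V \<and> ext1_zero C U V \<and>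
     (\<forall>A. ostar C U (shift_up C V) A)"

definition twin_cotorsion_pair :: "('o,'m) tricat \<Rightarrow> ('o \<Rightarrow> bool) \<Rightarrow> ('o \<Rightarrow> bool) \<Rightarrow>
    ('o \<Rightarrow> bool) \<Rightarrow> ('o \<Rightarrow> bool) \<Rightarrow> bool" where
  "twin_cotorsion_pair C S T U V \<longleftrightarrow> cotorsion_pair C S T \<and> cotorsion_pair C U V \<and> ext1_zero C S V"

text \<open>C^- = S[-1] * W with W = T \<inter> U.\<close>
definition Cminus :: "('o,'m) tricat \<Rightarrow> ('o \<Rightarrow> bool) \<Rightarrow> ('o \<Rightarrow> bool) \<Rightarrow> ('o \<Rightarrow> bool) \<Rightarrow> 'o \<Rightarrow> bool" where
  "Cminus C S T U = ostar C (shift_down C S) (\<lambda>X. T X \<and> U X)"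

end

theory Submission
  imports Defs
begin

text \<open>Both halves come from the octahedral axiom. Writing \<open>A\<close> (resp. \<open>B\<close>) as an extension
  \<open>P \<rightarrow> A \<rightarrow> W\<close> with \<open>P[1] \<in> \<S>\<close> and \<open>W \<in> \<W>\<close>, the octahedron on the composite with the given
  morphism produces a triangle whose cone is an extension of objects of \<open>\<U>\<close> (resp. \<open>\<S>\<close>);
  both classes are extension closed, being left halves of cotorsion pairs.
  In part (1) the new third vertex \<open>W'\<close> only lies in \<open>\<U>\<close>; it is replaced by an object of
  \<open>\<W>\<close> using the \<open>(\<S>,\<T>)\<close>-approximation triangle \<open>W' \<rightarrow> T \<rightarrow> S \<rightarrow> W'[1]\<close> together
  with \<open>\<S> \<subseteq> \<U>\<close>, and one more octahedron.\<close>

locale triangulated_cat =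
  fixes C :: "('o,'m) tricat"
  assumes triangulated: "triangulated C"
begin

lemma
  shows hom_comp: "f \<in> Hom C X Y \<Longrightarrow> g \<in> Hom C Y Z \<Longrightarrow> Comp C g f \<in> Hom C X Z"
    and comp_assoc: "f \<in> Hom C W X \<Longrightarrow> g \<in> Hom C X Y \<Longrightarrow> h \<in> Hom C Y Z \<Longrightarrow>
      Comp C h (Comp C g f) = Comp C (Comp C h g) f"
    and hom_id: "Idm C X \<in> Hom C X X"
    and id_left: "f \<in> Hom C X Y \<Longrightarrow> Comp C (Idm C Y) f = f"
    and id_right: "f \<in> Hom C X Y \<Longrightarrow> Comp C f (Idm C X) = f"
    and hom_zero: "Zer C X Y \<in> Hom C X Y"
    and hom_add: "f \<in> Hom C X Y \<Longrightarrow> g \<in> Hom C X Y \<Longrightarrow> Add C f g \<in> Hom C X Y"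
    and hom_neg: "f \<in> Hom C X Y \<Longrightarrow> Neg C f \<in> Hom C X Y"
    and add_assoc: "f \<in> Hom C X Y \<Longrightarrow> g \<in> Hom C X Y \<Longrightarrow> h \<in> Hom C X Y \<Longrightarrow>
      Add C (Add C f g) h = Add C f (Add C g h)"
    and add_commute: "f \<in> Hom C X Y \<Longrightarrow> g \<in> Hom C X Y \<Longrightarrow> Add C f g = Add C g f"
    and add_zero_right: "f \<in> Hom C X Y \<Longrightarrow> Add C f (Zer C X Y) = f"
    and add_neg_right: "f \<in> Hom C X Y \<Longrightarrow> Add C f (Neg C f) = Zer C X Y"
    and comp_add_right: "f \<in> Hom C X Y \<Longrightarrow> f' \<in> Hom C X Y \<Longrightarrow> g \<in> Hom C Y Z \<Longrightarrow>
      Comp C g (Add C f f') = Add C (Comp C g f) (Comp C g f')"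
    and comp_add_left: "f \<in> Hom C X Y \<Longrightarrow> g \<in> Hom C Y Z \<Longrightarrow> g' \<in> Hom C Y Z \<Longrightarrow>
      Comp C (Add C g g') f = Add C (Comp C g f) (Comp C g' f)"
    and zero_object_exists: "\<exists>Z. is_zero_obj C Z"
  using triangulated unfolding triangulated_def additive_cat_def by auto

lemma
  shows hom_shift: "f \<in> Hom C X Y \<Longrightarrow> ShM C f \<in> Hom C (Sh C X) (Sh C Y)"
    and shift_id: "ShM C (Idm C X) = Idm C (Sh C X)"
    and shift_comp: "f \<in> Hom C X Y \<Longrightarrow> g \<in> Hom C Y Z \<Longrightarrow>
      ShM C (Comp C g f) = Comp C (ShM C g) (ShM C f)"
    and shift_bij: "bij_betw (ShM C) (Hom C X Y) (Hom C (Sh C X) (Sh C Y))"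
    and shift_essentially_surjective: "\<exists>X. iso_obj C (Sh C X) Y"
  using triangulated unfolding triangulated_def shift_autoequiv_def by auto

lemmas triangle_axioms = triangulated[unfolded triangulated_def,
  THEN conjunct2, THEN conjunct2, THEN conjunct2]

lemma dist_hom: "Dist C X Y Z f g h \<Longrightarrow>
    f \<in> Hom C X Y \<and> g \<in> Hom C Y Z \<and> h \<in> Hom C Z (Sh C X)"
  using triangulated unfolding triangulated_def is_triangle_def by (elim conjE) blast

lemma dist_iso_closed: "Dist C X Y Z f g h \<Longrightarrow> is_triangle C X' Y' Z' f' g' h' \<Longrightarrow>
    is_iso C X X' a \<Longrightarrow> is_iso C Y Y' b \<Longrightarrow> is_iso C Z Z' c \<Longrightarrow>
    Comp C b f = Comp C f' a \<Longrightarrow> Comp C c g = Comp C g' b \<Longrightarrow>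
    Comp C (ShM C a) h = Comp C h' c \<Longrightarrow> Dist C X' Y' Z' f' g' h'"
  using triangle_axioms[THEN conjunct1] by blast

lemma dist_trivial: "is_zero_obj C Z \<Longrightarrow>
    Dist C X X Z (Idm C X) (Zer C X Z) (Zer C Z (Sh C X))"
  using triangle_axioms[THEN conjunct2, THEN conjunct1] by blast

lemma dist_exists: "f \<in> Hom C X Y \<Longrightarrow> \<exists>Z g h. Dist C X Y Z f g h"
  using triangle_axioms[THEN conjunct2, THEN conjunct2, THEN conjunct1] by blast

lemma dist_rotate_iff: "is_triangle C X Y Z f g h \<Longrightarrow>
    Dist C X Y Z f g h \<longleftrightarrow> Dist C Y Z (Sh C X) g h (Neg C (ShM C f))"
  using triangle_axioms[THEN conjunct2, THEN conjunct2, THEN conjunct2, THEN conjunct1] by blast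

lemma dist_morphism: "Dist C X Y Z f g h \<Longrightarrow> Dist C X' Y' Z' f' g' h' \<Longrightarrow>
    a \<in> Hom C X X' \<Longrightarrow> b \<in> Hom C Y Y' \<Longrightarrow> Comp C b f = Comp C f' a \<Longrightarrow>
    \<exists>c \<in> Hom C Z Z'. Comp C c g = Comp C g' b \<and> Comp C (ShM C a) h = Comp C h' c"
  using triangle_axioms[THEN conjunct2, THEN conjunct2, THEN conjunct2, THEN conjunct2, THEN conjunct1] by blast

lemma octahedral: "Dist C X Y Z' f p q \<Longrightarrow> Dist C Y Z X' g r s \<Longrightarrow>
    Dist C X Z Y' (Comp C g f) t w \<Longrightarrow>
    \<exists>u \<in> Hom C Z' Y'. \<exists>v \<in> Hom C Y' X'. Dist C Z' Y' X' u v (Comp C (ShM C p) s) \<and>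
      Comp C u p = Comp C t g \<and> Comp C w u = q \<and> Comp C v t = r \<and>
      Comp C s v = Comp C (ShM C f) w"
  using triangle_axioms[THEN conjunct2, THEN conjunct2, THEN conjunct2, THEN conjunct2, THEN conjunct2] by blast


lemma zero_add_left:
  assumes "f \<in> Hom C X Y" shows "Add C (Zer C X Y) f = f"
  using add_commute[OF hom_zero assms] add_zero_right[OF assms] by simp

lemma neg_add_left:
  assumes "f \<in> Hom C X Y" shows "Add C (Neg C f) f = Zer C X Y"
  using add_commute[OF hom_neg[OF assms] assms] add_neg_right[OF assms] by simp

lemma add_left_cancel:
  assumes f: "f \<in> Hom C X Y" and g: "g \<in> Hom C X Y" and h: "h \<in> Hom C X Y"
    and eq: "Add C f g = Add C f h"
  shows "g = h"
proof -
  have undo: "Add C (Neg C f) (Add C f k) = k" if k: "k \<in> Hom C X Y" for k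
  proof -
    have "Add C (Neg C f) (Add C f k) = Add C (Add C (Neg C f) f) k"
      by (rule add_assoc[OF hom_neg[OF f] f k, symmetric])
    also have "\<dots> = k" unfolding neg_add_left[OF f] by (rule zero_add_left[OF k])
    finally show ?thesis .
  qed
  have "g = Add C (Neg C f) (Add C f g)" by (rule undo[OF g, symmetric])
  also have "\<dots> = h" unfolding eq by (rule undo[OF h])
  finally show ?thesis .
qed

lemma add_idem_zero:
  assumes "f \<in> Hom C X Y" "Add C f f = f"
  shows "f = Zer C X Y"
  using add_left_cancel[OF assms(1) assms(1) hom_zero] add_zero_right[OF assms(1)] assms(2)
  by simp

lemma eq_if_add_neg_zero:
  assumes f: "f \<in> Hom C X Y" and g: "g \<in> Hom C X Y" and "Add C f (Neg C g) = Zer C X Y"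
  shows "f = g"
proof (rule add_left_cancel[OF hom_neg[OF g] f g])
  show "Add C (Neg C g) f = Add C (Neg C g) g"
    using add_commute[OF f hom_neg[OF g]] neg_add_left[OF g] assms(3) by simp
qed

lemma neg_neg:
  assumes f: "f \<in> Hom C X Y" shows "Neg C (Neg C f) = f"
proof (rule add_left_cancel[OF hom_neg[OF f] hom_neg[OF hom_neg[OF f]] f])
  show "Add C (Neg C f) (Neg C (Neg C f)) = Add C (Neg C f) f"
    using add_neg_right[OF hom_neg[OF f]] neg_add_left[OF f] by simp
qed

lemma comp_zero_right:
  assumes f: "f \<in> Hom C Y Z" shows "Comp C f (Zer C X Y) = Zer C X Z"
proof (rule add_idem_zero[OF hom_comp[OF hom_zero f]])
  show "Add C (Comp C f (Zer C X Y)) (Comp C f (Zer C X Y)) = Comp C f (Zer C X Y)"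
    using comp_add_right[OF hom_zero hom_zero f] add_zero_right[OF hom_zero] by simp
qed

lemma comp_zero_left:
  assumes f: "f \<in> Hom C X Y" shows "Comp C (Zer C Y Z) f = Zer C X Z"
proof (rule add_idem_zero[OF hom_comp[OF f hom_zero]])
  show "Add C (Comp C (Zer C Y Z) f) (Comp C (Zer C Y Z) f) = Comp C (Zer C Y Z) f"
    using comp_add_left[OF f hom_zero hom_zero] add_zero_right[OF hom_zero] by simp
qed

lemma comp_neg_right:
  assumes f: "f \<in> Hom C X Y" and g: "g \<in> Hom C Y Z"
  shows "Comp C g (Neg C f) = Neg C (Comp C g f)"
proof (rule add_left_cancel[OF hom_comp[OF f g] hom_comp[OF hom_neg[OF f] g] hom_neg[OF hom_comp[OF f g]]])
  have "Add C (Comp C g f) (Comp C g (Neg C f)) = Zer C X Z"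
    using comp_add_right[OF f hom_neg[OF f] g] add_neg_right[OF f] comp_zero_right[OF g] by simp
  then show "Add C (Comp C g f) (Comp C g (Neg C f)) = Add C (Comp C g f) (Neg C (Comp C g f))"
    using add_neg_right[OF hom_comp[OF f g]] by simp
qed

lemma comp_neg_left:
  assumes f: "f \<in> Hom C X Y" and g: "g \<in> Hom C Y Z"
  shows "Comp C (Neg C g) f = Neg C (Comp C g f)"
proof (rule add_left_cancel[OF hom_comp[OF f g] hom_comp[OF f hom_neg[OF g]] hom_neg[OF hom_comp[OF f g]]])
  have "Add C (Comp C g f) (Comp C (Neg C g) f) = Zer C X Z"
    using comp_add_left[OF f g hom_neg[OF g]] add_neg_right[OF g] comp_zero_left[OF f] by simp
  then show "Add C (Comp C g f) (Comp C (Neg C g) f) = Add C (Comp C g f) (Neg C (Comp C g f))"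
    using add_neg_right[OF hom_comp[OF f g]] by simp
qed

lemma neg_zero: "Neg C (Zer C X Y) = Zer C X Y"
  using zero_add_left[OF hom_neg[OF hom_zero]] add_neg_right[OF hom_zero] by simp

lemma shift_inj: "f \<in> Hom C X Y \<Longrightarrow> g \<in> Hom C X Y \<Longrightarrow> ShM C f = ShM C g \<Longrightarrow> f = g"
  using shift_bij[of X Y] unfolding bij_betw_def inj_on_def by blast

lemma shift_surj: "\<phi> \<in> Hom C (Sh C X) (Sh C Y) \<Longrightarrow> \<exists>f \<in> Hom C X Y. ShM C f = \<phi>"
  using shift_bij[of X Y] unfolding bij_betw_def by (metis imageE)

lemma iso_objE:
  assumes "iso_obj C X Y"
  obtains i j where "i \<in> Hom C X Y" "j \<in> Hom C Y X"
    "Comp C j i = Idm C X" "Comp C i j = Idm C Y"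
  using assms unfolding iso_obj_def is_iso_def by blast

lemma is_iso_id: "is_iso C X X (Idm C X)"
  unfolding is_iso_def using hom_id id_left by blast

lemma iso_obj_sym: "iso_obj C X Y \<Longrightarrow> iso_obj C Y X"
  unfolding iso_obj_def is_iso_def by blast

lemma subcat_iso_closed: "subcat C P \<Longrightarrow> P X \<Longrightarrow> iso_obj C X Y \<Longrightarrow> P Y"
  unfolding subcat_def by blast

lemma subcat_summand_closed: "subcat C P \<Longrightarrow> is_biprod C X Y Z \<Longrightarrow> P Z \<Longrightarrow> P X"
  unfolding subcat_def by blast

subsection \<open>Distinguished triangles\<close>

lemma dist_rotate: "Dist C X Y Z f g h \<Longrightarrow> Dist C Y Z (Sh C X) g h (Neg C (ShM C f))"
  using dist_rotate_iff dist_hom unfolding is_triangle_def by blast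

lemma dist_rotate_back:
  assumes d: "Dist C Y Z W g h k" and iso: "iso_obj C (Sh C X) W"
  obtains f h' where "Dist C X Y Z f g h'"
proof -
  have g: "g \<in> Hom C Y Z" and h: "h \<in> Hom C Z W" and k: "k \<in> Hom C W (Sh C Y)"
    using dist_hom[OF d] by auto
  obtain i j where ij: "i \<in> Hom C (Sh C X) W" "j \<in> Hom C W (Sh C X)"
    "Comp C j i = Idm C (Sh C X)" "Comp C i j = Idm C W"
    using iso by (rule iso_objE)
  have j_iso: "is_iso C W (Sh C X) j" unfolding is_iso_def using ij by blast
  have ki: "Comp C k i \<in> Hom C (Sh C X) (Sh C Y)" by (rule hom_comp[OF ij(1) k])
  obtain f where f: "f \<in> Hom C X Y" "ShM C f = Neg C (Comp C k i)"
    using shift_surj[OF hom_neg[OF ki]] by blast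
  have jh: "Comp C j h \<in> Hom C Z (Sh C X)" by (rule hom_comp[OF h ij(2)])
  have "Comp C (ShM C (Idm C Y)) k = Comp C (Comp C k i) j"
    using comp_assoc[OF ij(2,1) k] ij(4) id_right[OF k] id_left[OF k] shift_id by simp
  moreover have "Comp C (Idm C Z) g = Comp C g (Idm C Y)" using id_left[OF g] id_right[OF g] by simp
  moreover have "Comp C j h = Comp C (Comp C j h) (Idm C Z)" using id_right[OF jh] by simp
  ultimately have "Dist C Y Z (Sh C X) g (Comp C j h) (Comp C k i)"
    using dist_iso_closed[OF d _ is_iso_id is_iso_id j_iso] g jh ki
    unfolding is_triangle_def by blast
  moreover have "Neg C (ShM C f) = Comp C k i" using f(2) neg_neg[OF ki] by simp
  ultimately have "Dist C X Y Z f g (Comp C j h)"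
    using dist_rotate_iff f(1) g jh unfolding is_triangle_def by simp
  then show ?thesis by (rule that)
qed

lemma dist_comp_zero:
  assumes d: "Dist C X Y Z f g h"
  shows "Comp C g f = Zer C X Z"
proof -
  obtain N where "is_zero_obj C N" using zero_object_exists by blast
  from dist_morphism[OF dist_trivial[OF this] d hom_id] obtain c where
    "c \<in> Hom C N Z" "Comp C c (Zer C X N) = Comp C g f"
    using dist_hom[OF d] by blast
  then show ?thesis using comp_zero_right by metis
qed

lemma dist_factor_first:
  assumes d: "Dist C X Y Z f g h" and \<phi>: "\<phi> \<in> Hom C Q Y" and g\<phi>: "Comp C g \<phi> = Zer C Q Z"
  obtains \<psi> where "\<psi> \<in> Hom C Q X" "Comp C f \<psi> = \<phi>"
proof -
  obtain N where "is_zero_obj C N" using zero_object_exists by blast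
  then have triv: "Dist C Q N (Sh C Q) (Zer C Q N) (Zer C N (Sh C Q)) (Neg C (ShM C (Idm C Q)))"
    using dist_rotate dist_trivial by blast
  have f: "f \<in> Hom C X Y" using dist_hom[OF d] by blast
  have "Comp C (Zer C N Z) (Zer C Q N) = Comp C g \<phi>" using comp_zero_left[OF hom_zero] g\<phi> by simp
  from dist_morphism[OF triv dist_rotate[OF d] \<phi> hom_zero this] obtain c where
    c: "c \<in> Hom C (Sh C Q) (Sh C X)"
      "Comp C (ShM C \<phi>) (Neg C (ShM C (Idm C Q))) = Comp C (Neg C (ShM C f)) c"
    by blast
  have "Neg C (ShM C \<phi>) = Neg C (Comp C (ShM C f) c)"
    using c shift_id comp_neg_right[OF hom_id hom_shift[OF \<phi>]] id_right[OF hom_shift[OF \<phi>]]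
      comp_neg_left[OF c(1) hom_shift[OF f]] by simp
  then have "ShM C \<phi> = Comp C (ShM C f) c"
    using neg_neg hom_shift[OF \<phi>] hom_comp[OF c(1) hom_shift[OF f]] by metis
  moreover obtain \<psi> where \<psi>: "\<psi> \<in> Hom C Q X" "ShM C \<psi> = c" using shift_surj[OF c(1)] by blast
  ultimately have "\<phi> = Comp C f \<psi>"
    using shift_inj[OF \<phi> hom_comp[OF \<psi>(1) f]] shift_comp[OF \<psi>(1) f] by simp
  with \<psi>(1) show ?thesis using that by blast
qed

text \<open>The comparison triangle \<open>X' \<rightarrow> Q \<rightarrow> Q\<close> is a backward rotation of the trivial one;
  the map on first vertices can then be taken to be zero.\<close>

lemma dist_factor_second:
  assumes d: "Dist C X Y Z f g h" and \<phi>: "\<phi> \<in> Hom C Y Q" and \<phi>f: "Comp C \<phi> f = Zer C X Q"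
  obtains \<psi> where "\<psi> \<in> Hom C Z Q" "Comp C \<psi> g = \<phi>"
proof -
  obtain N where "is_zero_obj C N" using zero_object_exists by blast
  moreover obtain X' where "iso_obj C (Sh C X') N" using shift_essentially_surjective by blast
  ultimately obtain f' h' where d': "Dist C X' Q Q f' (Idm C Q) h'"
    using dist_rotate_back dist_trivial by metis
  have "Comp C \<phi> f = Comp C f' (Zer C X X')"
    using \<phi>f comp_zero_right dist_hom[OF d'] by metis
  from dist_morphism[OF d d' hom_zero \<phi> this] obtain \<psi> where
    "\<psi> \<in> Hom C Z Q" "Comp C \<psi> g = Comp C (Idm C Q) \<phi>" by blast
  then show ?thesis using that id_left[OF \<phi>] by simp
qed

lemma octahedral_cone:
  assumes "Dist C X Y Z' f p q" "Dist C Y Z X' g r s"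
  obtains Y' t w u v where "Dist C X Z Y' (Comp C g f) t w"
    "Dist C Z' Y' X' u v (Comp C (ShM C p) s)"
proof -
  obtain Y' t w where d: "Dist C X Z Y' (Comp C g f) t w"
    using dist_exists hom_comp dist_hom assms by metis
  with octahedral[OF assms d] that show ?thesis by blast
qed

lemma dist_split_mono_third_zero:
  assumes d: "Dist C X Y Z f g h" and r: "r \<in> Hom C Y X" and rf: "Comp C r f = Idm C X"
  shows "h = Zer C Z (Sh C X)"
proof -
  have f: "f \<in> Hom C X Y" and h: "h \<in> Hom C Z (Sh C X)" using dist_hom[OF d] by auto
  have fh: "Comp C (ShM C f) h \<in> Hom C Z (Sh C Y)" by (rule hom_comp[OF h hom_shift[OF f]])
  have "Neg C (Comp C (ShM C f) h) = Zer C Z (Sh C Y)"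
    using dist_comp_zero[OF dist_rotate[OF dist_rotate[OF d]]] comp_neg_left[OF h hom_shift[OF f]]
    by simp
  then have "Comp C (ShM C f) h = Zer C Z (Sh C Y)"
    using neg_neg[OF fh] neg_zero by metis
  then have "Comp C (ShM C r) (Comp C (ShM C f) h) = Zer C Z (Sh C X)"
    using comp_zero_right[OF hom_shift[OF r]] by simp
  then show ?thesis
    using comp_assoc[OF h hom_shift[OF f] hom_shift[OF r]] shift_comp[OF f r] rf shift_id
      id_left[OF h] by simp
qed

lemma dist_third_zero_cancel:
  assumes d: "Dist C X Y Z f g h" and h0: "h = Zer C Z (Sh C X)"
    and t: "t \<in> Hom C Z Q" and tg: "Comp C t g = Zer C Y Q"
  shows "t = Zer C Z Q"
proof -
  obtain \<psi> where "\<psi> \<in> Hom C (Sh C X) Q" "Comp C \<psi> h = t"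
    using dist_factor_second[OF dist_rotate[OF d] t tg] by blast
  then show ?thesis using h0 comp_zero_right[of \<psi>] by simp
qed

lemma dist_split_mono_complement:
  assumes d: "Dist C X Y Z f g h" and r: "r \<in> Hom C Y X" and rf: "Comp C r f = Idm C X"
  obtains s where "s \<in> Hom C Z Y" "Add C (Comp C f r) (Comp C s g) = Idm C Y"
proof -
  have f: "f \<in> Hom C X Y" using dist_hom[OF d] by auto
  have fr: "Comp C f r \<in> Hom C Y Y" by (rule hom_comp[OF r f])
  define e where "e = Add C (Idm C Y) (Neg C (Comp C f r))"
  have e: "e \<in> Hom C Y Y" unfolding e_def by (rule hom_add[OF hom_id hom_neg[OF fr]])
  have "Comp C e f = Add C f (Neg C (Comp C f (Comp C r f)))"
    unfolding e_def using comp_add_left[OF f hom_id hom_neg[OF fr]] comp_neg_left[OF f fr]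
      id_left[OF f] comp_assoc[OF f r f] by simp
  then have "Comp C e f = Zer C X Y" using rf id_right[OF f] add_neg_right[OF f] by simp
  then obtain s where s: "s \<in> Hom C Z Y" "Comp C s g = e"
    using dist_factor_second[OF d e] by blast
  have "Add C (Comp C f r) (Comp C s g) = Add C (Add C (Comp C f r) (Neg C (Comp C f r))) (Idm C Y)"
    unfolding s(2) e_def
    using add_assoc[OF fr hom_neg[OF fr] hom_id] add_assoc[OF fr hom_id hom_neg[OF fr]]
      add_commute[OF hom_id hom_neg[OF fr]] by simp
  then have "Add C (Comp C f r) (Comp C s g) = Idm C Y"
    using add_neg_right[OF fr] zero_add_left[OF hom_id] by simp
  with s(1) show ?thesis by (rule that)
qed

lemma dist_split_mono_biprod:
  assumes d: "Dist C X Y Z f g h" and r: "r \<in> Hom C Y X" and rf: "Comp C r f = Idm C X"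
  shows "is_biprod C X Z Y"
proof -
  have f: "f \<in> Hom C X Y" and g: "g \<in> Hom C Y Z" using dist_hom[OF d] by auto
  obtain s where s: "s \<in> Hom C Z Y" and sum: "Add C (Comp C f r) (Comp C s g) = Idm C Y"
    using dist_split_mono_complement[OF d r rf] .
  note epi = dist_third_zero_cancel[OF d dist_split_mono_third_zero[OF d r rf]]
  have fr: "Comp C f r \<in> Hom C Y Y" and sg: "Comp C s g \<in> Hom C Y Y"
    and gs: "Comp C g s \<in> Hom C Z Z" and rs: "Comp C r s \<in> Hom C Z X"
    using hom_comp[OF r f] hom_comp[OF g s] hom_comp[OF s g] hom_comp[OF s r] by auto
  have gf: "Comp C g f = Zer C X Z" by (rule dist_comp_zero[OF d])
  have "g = Comp C g (Add C (Comp C f r) (Comp C s g))" using sum id_right[OF g] by simp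
  also have "\<dots> = Add C (Comp C (Comp C g f) r) (Comp C (Comp C g s) g)"
    using comp_add_right[OF fr sg g] comp_assoc[OF r f g] comp_assoc[OF g s g] by simp
  also have "\<dots> = Comp C (Comp C g s) g"
    using gf comp_zero_left[OF r] zero_add_left[OF hom_comp[OF g gs]] by simp
  finally have "Comp C (Add C (Comp C g s) (Neg C (Idm C Z))) g = Zer C Y Z"
    using comp_add_left[OF g gs hom_neg[OF hom_id]] comp_neg_left[OF g hom_id] id_left[OF g]
      add_neg_right[OF g] by simp
  then have gs_id: "Comp C g s = Idm C Z"
    using epi[OF hom_add[OF gs hom_neg[OF hom_id]]] eq_if_add_neg_zero[OF gs hom_id] by blast
  have "r = Comp C r (Add C (Comp C f r) (Comp C s g))" using sum id_right[OF r] by simp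
  also have "\<dots> = Add C (Comp C (Comp C r f) r) (Comp C (Comp C r s) g)"
    using comp_add_right[OF fr sg r] comp_assoc[OF r f r] comp_assoc[OF g s r] by simp
  finally have "Add C r (Zer C Y X) = Add C r (Comp C (Comp C r s) g)"
    using rf id_left[OF r] add_zero_right[OF r] by simp
  then have "Comp C (Comp C r s) g = Zer C Y X"
    using add_left_cancel[OF r hom_zero hom_comp[OF g rs]] by simp
  then have rs_zero: "Comp C r s = Zer C Z X" using epi[OF rs] by blast
  show ?thesis unfolding is_biprod_def using f s r g rf gs_id rs_zero gf sum by blast
qed

subsection \<open>Cotorsion pairs\<close>

lemma cotorsion_pair_left_if_orthogonal:
  assumes cp: "cotorsion_pair C L R"
    and orth: "\<And>V \<phi>. R V \<Longrightarrow> \<phi> \<in> Hom C B (Sh C V) \<Longrightarrow> \<phi> = Zer C B (Sh C V)"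
  shows "L B"
proof -
  obtain U0 Y0 k e l where U0: "L U0" and Y0: "shift_up C R Y0" and d: "Dist C U0 B Y0 k e l"
    using cp unfolding cotorsion_pair_def ostar_def by blast
  obtain V where V: "R V" "iso_obj C (Sh C V) Y0" using Y0 unfolding shift_up_def by blast
  obtain i j where ij: "i \<in> Hom C (Sh C V) Y0" "j \<in> Hom C Y0 (Sh C V)" "Comp C i j = Idm C Y0"
    using V(2) by (rule iso_objE)
  have k: "k \<in> Hom C U0 B" and e: "e \<in> Hom C B Y0" using dist_hom[OF d] by auto
  have "e = Comp C i (Comp C j e)" using comp_assoc[OF e ij(2,1)] ij(3) id_left[OF e] by simp
  also have "\<dots> = Zer C B Y0" using orth[OF V(1) hom_comp[OF e ij(2)]] comp_zero_right[OF ij(1)]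
    by simp
  finally have "Comp C e (Idm C B) = Zer C B Y0" using id_right[OF e] by simp
  then obtain s where s: "s \<in> Hom C B U0" "Comp C k s = Idm C B"
    using dist_factor_first[OF d hom_id] by blast
  obtain K t w where "Dist C B U0 K s t w" using dist_exists[OF s(1)] by blast
  then have "is_biprod C B K U0" using dist_split_mono_biprod k s(2) by blast
  then show ?thesis using cp U0 subcat_summand_closed unfolding cotorsion_pair_def by blast
qed

lemma cotorsion_pair_left_extension_closed:
  assumes cp: "cotorsion_pair C L R"
    and d: "Dist C A B D f g h" and A: "L A" and D: "L D"
  shows "L B"
proof (rule cotorsion_pair_left_if_orthogonal[OF cp])
  fix V \<phi> assume V: "R V" and \<phi>: "\<phi> \<in> Hom C B (Sh C V)"
  have ext: "ext1_zero C L R" using cp unfolding cotorsion_pair_def by blast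
  have f: "f \<in> Hom C A B" and g: "g \<in> Hom C B D" using dist_hom[OF d] by auto
  have "Comp C \<phi> f = Zer C A (Sh C V)"
    using ext A V hom_comp[OF f \<phi>] unfolding ext1_zero_def by blast
  then obtain \<psi> where \<psi>: "\<psi> \<in> Hom C D (Sh C V)" "Comp C \<psi> g = \<phi>"
    using dist_factor_second[OF d \<phi>] by blast
  then have "\<psi> = Zer C D (Sh C V)" using ext D V unfolding ext1_zero_def by blast
  then show "\<phi> = Zer C B (Sh C V)" using \<psi>(2) comp_zero_left[OF g] by simp
qed

text \<open>The approximation triangle \<open>L \<rightarrow> W[1] \<rightarrow> R[1]\<close> of \<open>W[1]\<close>, rotated backwards twice.\<close>

lemma cotorsion_pair_right_approximation:
  assumes cp: "cotorsion_pair C L R"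
  obtains Y Z f g h where "Dist C W Y Z f g h" "R Y" "L Z"
proof -
  obtain Z Y1 \<alpha> \<beta> \<gamma> where Z: "L Z" and Y1: "shift_up C R Y1"
    and d: "Dist C Z (Sh C W) Y1 \<alpha> \<beta> \<gamma>"
    using cp unfolding cotorsion_pair_def ostar_def by blast
  obtain Y where Y: "R Y" "iso_obj C (Sh C Y) Y1" using Y1 unfolding shift_up_def by blast
  obtain f1 h1 where "Dist C Y Z (Sh C W) f1 \<alpha> h1" using dist_rotate_back[OF d Y(2)] .
  moreover have "iso_obj C (Sh C W) (Sh C W)" unfolding iso_obj_def using is_iso_id by blast
  ultimately obtain f h where "Dist C W Y Z f f1 h" by (rule dist_rotate_back)
  with Y(1) Z show ?thesis using that by blast
qed

end

subsection \<open>The class \<open>\<C>\<^sup>-\<close>\<close>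

locale twin_cotorsion = triangulated_cat +
  fixes S T U V :: "'o \<Rightarrow> bool"
  assumes twin: "twin_cotorsion_pair C S T U V"
begin

lemma cotorsion_S: "cotorsion_pair C S T"
  and cotorsion_U: "cotorsion_pair C U V"
  using twin unfolding twin_cotorsion_pair_def by auto

lemma S_imp_U: "S X \<Longrightarrow> U X"
  using twin cotorsion_pair_left_if_orthogonal[OF cotorsion_U]
  unfolding twin_cotorsion_pair_def ext1_zero_def by blast

lemma Cminus_if_cone_in_S:
  assumes d: "Dist C B W Y k t w" and Y: "S Y" and W: "T W" "U W"
  shows "Cminus C S T U B"
proof -
  obtain P where P: "iso_obj C (Sh C P) Y" using shift_essentially_surjective by blast
  obtain p h where "Dist C P B W p k h" using dist_rotate_back[OF d P] .
  moreover have "subcat C S" using cotorsion_S unfolding cotorsion_pair_def by blast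
  then have "S (Sh C P)" using subcat_iso_closed Y iso_obj_sym[OF P] by blast
  ultimately show ?thesis unfolding Cminus_def ostar_def shift_down_def using W by blast
qed

lemma Cminus_if_third_vertex_in_U:
  assumes d: "Dist C P B W a b c" and P: "S (Sh C P)" and W: "U W"
  shows "Cminus C S T U B"
proof -
  obtain Y Z f g h where d': "Dist C W Y Z f g h" and Y: "T Y" and Z: "S Z"
    using cotorsion_pair_right_approximation[OF cotorsion_S] by blast
  obtain Y' t w u v \<theta> where dB: "Dist C B Y Y' (Comp C f b) t w"
    and "Dist C (Sh C P) Y' Z u v \<theta>"
    using octahedral_cone[OF dist_rotate[OF d] d'] .
  then have "S Y'" using cotorsion_pair_left_extension_closed[OF cotorsion_S _ P Z] by blast
  moreover have "U Y"
    using cotorsion_pair_left_extension_closed[OF cotorsion_U d' W S_imp_U[OF Z]] .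
  ultimately show ?thesis using Cminus_if_cone_in_S[OF dB] Y by blast
qed

lemma Cminus_closed_under_cone_of_U:
  assumes d: "Dist C X A B x f y" and X: "U (Sh C X)" and A: "Cminus C S T U A"
  shows "Cminus C S T U B"
proof -
  obtain P W p q r where P: "S (Sh C P)" and W: "U W" and dA: "Dist C P A W p q r"
    using A unfolding Cminus_def ostar_def shift_down_def by blast
  obtain W' t w u v \<theta> where dB: "Dist C P B W' (Comp C f p) t w" and "Dist C W W' (Sh C X) u v \<theta>"
    using octahedral_cone[OF dA dist_rotate[OF d]] .
  then have "U W'" using cotorsion_pair_left_extension_closed[OF cotorsion_U _ W X] by blast
  then show ?thesis by (rule Cminus_if_third_vertex_in_U[OF dB P])
qed

lemma Cminus_closed_under_cocone_of_S:
  assumes d: "Dist C X A B x f y" and X: "S (Sh C X)" and B: "Cminus C S T U B"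
  shows "Cminus C S T U A"
proof -
  obtain P W p q r where P: "S (Sh C P)" and W: "T W" "U W" and dB: "Dist C P B W p q r"
    using B unfolding Cminus_def ostar_def shift_down_def by blast
  obtain Y t w u v \<theta> where dA: "Dist C A W Y (Comp C q f) t w" and "Dist C (Sh C X) Y (Sh C P) u v \<theta>"
    using octahedral_cone[OF dist_rotate[OF d] dist_rotate[OF dB]] .
  then have "S Y" using cotorsion_pair_left_extension_closed[OF cotorsion_S _ X P] by blast
  then show ?thesis using Cminus_if_cone_in_S[OF dA _ W] by blast
qed

end

theorem lemma2p12:
  fixes C :: "('o, 'm) tricat"
    and S T U V :: "'o \<Rightarrow> bool"
  assumes "triangulated C"
    and "twin_cotorsion_pair C S T U V"
  shows "(\<forall>X A B x f y. Dist C X A B x f y \<longrightarrow> U (Sh C X) \<longrightarrow>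
            Cminus C S T U A \<longrightarrow> Cminus C S T U B)
       \<and> (\<forall>X A B x f y. Dist C X A B x f y \<longrightarrow> S (Sh C X) \<longrightarrow>
            Cminus C S T U B \<longrightarrow> Cminus C S T U A)"
proof -
  interpret twin_cotorsion C S T U V
    using assms by (intro twin_cotorsion.intro triangulated_cat.intro twin_cotorsion_axioms.intro)
  show ?thesis
    using Cminus_closed_under_cone_of_U Cminus_closed_under_cocone_of_S by blast
qed

end
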